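(* Let $1\le r\le\infty$ and define, for nonzero closed convex cones $P,Q\subseteq\mathbb R^n$, ${\rm Dis}_r(P,Q):={\rm dis}_r(P\cap S_n,Q\cap S_n)$. Then ${\rm Dis}_r$ is a distance on the set of nonzero closed convex cones of $\mathbb R^n$, and $${\rm Dis}_r(P,Q)=2\left\|\left(\sin\left[\tfrac{\Theta(P,Q)}{2}\right],\ \sin\left[\tfrac{\Theta(Q,P)}{2}\right]\right)\right\|_r .$$ In particular $\Lambda(P\cap S_n,Q\cap S_n)=2\sin[\Theta(P,Q)/2]$.
   Context: $S_n:=\{u\in\mathbb R^n:\|u\|=1\}$. For nonempty compact $C,D\subseteq\mathbb R^n$: $\mathtt d_D(x):=\min_{y\in D}\|x-y\|$, $\Lambda(C,D):=\max_{x\in C}\mathtt d_D(x)$, and ${\rm dis}_r(C,D):=\|(\Lambda(C,D),\Lambda(D,C))\|_r$, with $\|\cdot\|_r$ the $\ell^r$-norm on $\mathbb R^2$. For nonzero closed convex cones $P,Q$, $\Theta(P,Q):=\max_{u\in P\cap S_n}\min_{v\in Q\cap S_n}\arccos\langle u,v\rangle$. *)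

theory Defs
  imports "HOL-Analysis.Analysis"
begin

definition unit_sphere :: "'a::euclidean_space set" where
  "unit_sphere = {u. norm u = 1}"

definition distfun :: "'a::euclidean_space set \<Rightarrow> 'a \<Rightarrow> real" where
  "distfun D x = (INF y\<in>D. norm (x - y))"

definition excess :: "'a::euclidean_space set \<Rightarrow> 'a set \<Rightarrow> real" where
  "excess C D = (SUP x\<in>C. distfun D x)"

definition lr_norm :: "ereal \<Rightarrow> real \<Rightarrow> real \<Rightarrow> real" where
  "lr_norm r a b =
     (if r = \<infinity> then max \<bar>a\<bar> \<bar>b\<bar>
      else (\<bar>a\<bar> powr real_of_ereal r + \<bar>b\<bar> powr real_of_ereal r) powr (1 / real_of_ereal r))"

definition dis_r :: "ereal \<Rightarrow> 'a::euclidean_space set \<Rightarrow> 'a set \<Rightarrow> real" where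
  "dis_r r C D = lr_norm r (excess C D) (excess D C)"

definition Dis_r :: "ereal \<Rightarrow> 'a::euclidean_space set \<Rightarrow> 'a set \<Rightarrow> real" where
  "Dis_r r P Q = dis_r r (P \<inter> unit_sphere) (Q \<inter> unit_sphere)"

definition Theta :: "'a::euclidean_space set \<Rightarrow> 'a set \<Rightarrow> real" where
  "Theta P Q = (SUP u\<in>P \<inter> unit_sphere. INF v\<in>Q \<inter> unit_sphere. arccos (u \<bullet> v))"

definition nz_closed_convex_cones :: "'a::euclidean_space set set" where
  "nz_closed_convex_cones = {P. closed P \<and> convex_cone P \<and> P \<noteq> {0}}"

definition is_distance_on :: "'b set \<Rightarrow> ('b \<Rightarrow> 'b \<Rightarrow> real) \<Rightarrow> bool" where
  "is_distance_on K d \<longleftrightarrow>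
     (\<forall>P\<in>K. \<forall>Q\<in>K. 0 \<le> d P Q \<and> (d P Q = 0 \<longleftrightarrow> P = Q) \<and> d P Q = d Q P) \<and>
     (\<forall>P\<in>K. \<forall>Q\<in>K. \<forall>R\<in>K. d P R \<le> d P Q + d Q R)"

end

theory Submission
  imports Defs
begin

text \<open>For unit vectors \<open>u\<close>, \<open>v\<close> the chord \<open>\<parallel>u - v\<parallel>\<close> equals \<open>2 sin (\<theta>/2)\<close> with
  \<open>\<theta> = arccos \<langle>u,v\<rangle>\<close>, and \<open>\<theta> \<mapsto> 2 sin (\<theta>/2)\<close> is increasing on \<open>[0,\<pi>]\<close>. Hence it
  commutes with the minimum over \<open>v\<close> and the maximum over \<open>u\<close> (both attained by compactness),
  which turns the excess \<open>\<Lambda>\<close> of the spherical traces into \<open>2 sin (\<Theta>/2)\<close>.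
  The \<open>\<ell>\<^sup>r\<close>-combination of the two one-sided excesses is a metric on nonempty compact sets
  (Minkowski's inequality in \<open>\<real>\<^sup>2\<close>), and a cone is determined by its trace on the sphere,
  so this metric pulls back to the nonzero closed convex cones.\<close>

lemma powr_convex_nonneg:
  assumes "p \<ge> 1"
  shows "convex_on {0..} (\<lambda>x::real. x powr p)"
proof (rule convex_on_linorderI)
  fix t x y :: real
  assume t: "0 < t" "t < 1" and xy: "x \<in> {0..}" "y \<in> {0..}" "x < y"
  show "((1 - t) *\<^sub>R x + t *\<^sub>R y) powr p \<le> (1 - t) * x powr p + t * y powr p"
  proof (cases "x = 0")
    case True
    have "t powr p \<le> t"
      using powr_le_one_le[of t p] t assms by simp
    then have "t powr p * y powr p \<le> t * y powr p"
      by (simp add: mult_right_mono)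
    then show ?thesis
      using True t xy assms by (simp add: powr_mult)
  next
    case False
    then show ?thesis
      using convex_onD[OF powr_convex[OF assms], of t x y] t xy by simp
  qed
qed simp

lemma Minkowski_inequality_2:
  fixes p a1 a2 b1 b2 :: real
  assumes p: "p \<ge> 1" and nonneg: "a1 \<ge> 0" "a2 \<ge> 0" "b1 \<ge> 0" "b2 \<ge> 0"
  shows "((a1 + b1) powr p + (a2 + b2) powr p) powr (1/p)
     \<le> (a1 powr p + a2 powr p) powr (1/p) + (b1 powr p + b2 powr p) powr (1/p)"
proof -
  define A where "A = (a1 powr p + a2 powr p) powr (1/p)"
  define B where "B = (b1 powr p + b2 powr p) powr (1/p)"
  have A_pow: "A powr p = a1 powr p + a2 powr p" and B_pow: "B powr p = b1 powr p + b2 powr p"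
    unfolding A_def B_def using p by (simp_all add: powr_powr)
  show ?thesis
  proof (cases "A = 0 \<or> B = 0")
    case True
    then have "a1 = 0 \<and> a2 = 0 \<or> b1 = 0 \<and> b2 = 0"
      using A_pow B_pow p nonneg by (auto simp: add_nonneg_eq_0_iff)
    then show ?thesis
      by (auto simp: A_def B_def)
  next
    case False
    then have pos: "A > 0" "B > 0"
      by (auto simp: A_def B_def)
    define t where "t = B / (A + B)"
    have t: "0 \<le> t" "t \<le> 1" "1 - t = A / (A + B)"
      using pos by (auto simp: t_def field_simps)
    have convex_combination: "((1 - t) * x + t * y) powr p \<le> (1 - t) * x powr p + t * y powr p"
      if "x \<ge> 0" "y \<ge> 0" for x y
      using convex_onD[OF powr_convex_nonneg[OF p], of t x y] t that by simp
    \<comment> \<open>\<open>(a\<^sub>i + b\<^sub>i)/(A + B)\<close> is a convex combination of \<open>a\<^sub>i/A\<close> and \<open>b\<^sub>i/B\<close>, whose \<open>p\<close>-power sums are \<open>1\<close>\<close>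
    have split: "(a + b) / (A + B) = (1 - t) * (a / A) + t * (b / B)" for a b
      unfolding t(3) unfolding t_def using pos by (simp add: add_divide_distrib)
    have "((a1 + b1) / (A + B)) powr p + ((a2 + b2) / (A + B)) powr p
        \<le> ((1 - t) * (a1 / A) powr p + t * (b1 / B) powr p)
          + ((1 - t) * (a2 / A) powr p + t * (b2 / B) powr p)"
      unfolding split using nonneg pos
      by (intro add_mono convex_combination) auto
    also have "\<dots> = (1 - t) * ((a1 powr p + a2 powr p) / A powr p)
        + t * ((b1 powr p + b2 powr p) / B powr p)"
      using nonneg pos by (simp add: powr_divide field_simps)
    also have "\<dots> = 1"
      unfolding A_pow[symmetric] B_pow[symmetric] using pos by simp
    finally have "(a1 + b1) powr p + (a2 + b2) powr p \<le> (A + B) powr p"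
      using pos nonneg by (simp add: powr_divide add_divide_distrib[symmetric] divide_le_eq)
    then have "((a1 + b1) powr p + (a2 + b2) powr p) powr (1/p) \<le> ((A + B) powr p) powr (1/p)"
      using p by (intro powr_mono2) auto
    also have "\<dots> = A + B"
      using p pos by (simp add: powr_powr)
    finally show ?thesis
      unfolding A_def B_def .
  qed
qed

lemma ereal_ge_1_cases:
  assumes "1 \<le> (r::ereal)"
  obtains "r = \<infinity>" | p where "r = ereal p" "p \<ge> 1"
  using assms by (cases r) auto

lemma lr_norm_nonneg: "lr_norm r a b \<ge> 0"
  unfolding lr_norm_def by auto

lemma lr_norm_commute: "lr_norm r a b = lr_norm r b a"
  unfolding lr_norm_def by (auto simp: max.commute add.commute)

lemma lr_norm_abs: "lr_norm r \<bar>a\<bar> \<bar>b\<bar> = lr_norm r a b"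
  unfolding lr_norm_def by simp

lemma lr_norm_eq_0_iff:
  assumes "1 \<le> r"
  shows "lr_norm r a b = 0 \<longleftrightarrow> a = 0 \<and> b = 0"
  using assms
proof (cases rule: ereal_ge_1_cases)
  case 1
  then show ?thesis
    unfolding lr_norm_def by (auto simp: max_def)
next
  case (2 p)
  then show ?thesis
    unfolding lr_norm_def by (auto simp: add_nonneg_eq_0_iff)
qed

lemma lr_norm_mono:
  assumes "1 \<le> r" "\<bar>a\<bar> \<le> \<bar>a'\<bar>" "\<bar>b\<bar> \<le> \<bar>b'\<bar>"
  shows "lr_norm r a b \<le> lr_norm r a' b'"
  using assms(1)
proof (cases rule: ereal_ge_1_cases)
  case 1
  then show ?thesis
    using assms unfolding lr_norm_def by auto
next
  case (2 p)
  then show ?thesis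
    using assms unfolding lr_norm_def by (auto intro!: powr_mono2 add_mono)
qed

lemma lr_norm_triangle:
  assumes "1 \<le> r"
  shows "lr_norm r (a1 + b1) (a2 + b2) \<le> lr_norm r a1 a2 + lr_norm r b1 b2"
proof -
  have "lr_norm r (a1 + b1) (a2 + b2) \<le> lr_norm r (\<bar>a1\<bar> + \<bar>b1\<bar>) (\<bar>a2\<bar> + \<bar>b2\<bar>)"
    using assms by (rule lr_norm_mono) auto
  also have "\<dots> \<le> lr_norm r \<bar>a1\<bar> \<bar>a2\<bar> + lr_norm r \<bar>b1\<bar> \<bar>b2\<bar>"
    using assms
  proof (cases rule: ereal_ge_1_cases)
    case 1
    then show ?thesis
      unfolding lr_norm_def by auto
  next
    case (2 p)
    then show ?thesis
      using Minkowski_inequality_2[of p "\<bar>a1\<bar>" "\<bar>a2\<bar>" "\<bar>b1\<bar>" "\<bar>b2\<bar>"]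
      unfolding lr_norm_def by auto
  qed
  finally show ?thesis
    by (simp only: lr_norm_abs)
qed

lemma lr_norm_scale:
  assumes "1 \<le> r"
  shows "lr_norm r (c * a) (c * b) = \<bar>c\<bar> * lr_norm r a b"
  using assms
proof (cases rule: ereal_ge_1_cases)
  case 1
  then show ?thesis
    unfolding lr_norm_def by (auto simp: abs_mult max_mult_distrib_left)
next
  case (2 p)
  have "(\<bar>c * a\<bar> powr p + \<bar>c * b\<bar> powr p) powr (1/p)
      = (\<bar>c\<bar> powr p * (\<bar>a\<bar> powr p + \<bar>b\<bar> powr p)) powr (1/p)"
    by (simp add: abs_mult powr_mult distrib_left)
  also have "\<dots> = (\<bar>c\<bar> powr p) powr (1/p) * (\<bar>a\<bar> powr p + \<bar>b\<bar> powr p) powr (1/p)"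
    by (simp add: powr_mult)
  also have "(\<bar>c\<bar> powr p) powr (1/p) = \<bar>c\<bar>"
    using 2 by (simp add: powr_powr)
  finally show ?thesis
    using 2 unfolding lr_norm_def by simp
qed

lemma excess_eq_SUP_infdist: "D \<noteq> {} \<Longrightarrow> excess C D = (SUP x\<in>C. infdist x D)"
  unfolding excess_def distfun_def infdist_def by (simp add: dist_norm)

lemma infdist_le_excess:
  assumes "compact C" "D \<noteq> {}" "x \<in> C"
  shows "infdist x D \<le> excess C D"
proof -
  have "bdd_above ((\<lambda>x. infdist x D) ` C)"
    using assms(1) by (intro bounded_imp_bdd_above compact_imp_bounded
        compact_continuous_image continuous_intros)
  then show ?thesis
    unfolding excess_eq_SUP_infdist[OF assms(2)] by (rule cSUP_upper[OF assms(3)])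
qed

lemma excess_nonneg:
  assumes "compact C" "C \<noteq> {}" "D \<noteq> {}"
  shows "excess C D \<ge> 0"
  using assms infdist_le_excess[OF assms(1,3)] infdist_nonneg by (meson ex_in_conv order_trans)

lemma excess_eq_0_iff_subset:
  assumes "compact C" "C \<noteq> {}" "closed D" "D \<noteq> {}"
  shows "excess C D = 0 \<longleftrightarrow> C \<subseteq> D"
proof
  assume "excess C D = 0"
  then have "infdist x D = 0" if "x \<in> C" for x
    using infdist_le_excess[OF assms(1,4) that] infdist_nonneg by (metis order_antisym)
  then show "C \<subseteq> D"
    using in_closed_iff_infdist_zero[OF assms(3,4)] by blast
next
  assume "C \<subseteq> D"
  then show "excess C D = 0"
    unfolding excess_eq_SUP_infdist[OF assms(4)] using assms(2) by (simp add: subset_eq)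
qed

lemma infdist_le_infdist_plus_excess:
  assumes "compact B" "B \<noteq> {}" "C \<noteq> {}"
  shows "infdist x C \<le> infdist x B + excess B C"
proof -
  obtain y where "y \<in> B" "infdist x B = dist x y"
    using infdist_attains_inf[OF compact_imp_closed] assms(1,2) by blast
  then show ?thesis
    using infdist_triangle[of x C y] infdist_le_excess[OF assms(1,3)] by force
qed

lemma excess_triangle:
  assumes "compact A" "A \<noteq> {}" "compact B" "B \<noteq> {}" "C \<noteq> {}"
  shows "excess A C \<le> excess A B + excess B C"
proof -
  have "infdist x C \<le> excess A B + excess B C" if "x \<in> A" for x
    using infdist_le_infdist_plus_excess[OF assms(3-5), of x] infdist_le_excess[OF assms(1,4) that]
    by linarith
  then show ?thesis
    unfolding excess_eq_SUP_infdist[OF assms(5)] using assms(2) by (intro cSUP_least)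
qed

lemma is_distance_on_dis_r:
  assumes "1 \<le> r"
  shows "is_distance_on {C :: 'a::euclidean_space set. compact C \<and> C \<noteq> {}} (dis_r r)"
  unfolding is_distance_on_def
proof (intro conjI ballI)
  fix C D E :: "'a set"
  assume C: "C \<in> {C. compact C \<and> C \<noteq> {}}" and D: "D \<in> {C. compact C \<and> C \<noteq> {}}"
    and E: "E \<in> {C. compact C \<and> C \<noteq> {}}"
  show "dis_r r C D \<ge> 0"
    unfolding dis_r_def by (rule lr_norm_nonneg)
  show "dis_r r C D = dis_r r D C"
    unfolding dis_r_def by (rule lr_norm_commute)
  show "dis_r r C D = 0 \<longleftrightarrow> C = D"
    using C D unfolding dis_r_def lr_norm_eq_0_iff[OF assms]
    by (auto simp: excess_eq_0_iff_subset compact_imp_closed)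
  have "dis_r r C E \<le> lr_norm r (excess C D + excess D E) (excess E D + excess D C)"
    unfolding dis_r_def using C D E
    by (intro lr_norm_mono[OF assms]) (auto simp: excess_nonneg excess_triangle)
  also have "\<dots> \<le> dis_r r C D + dis_r r D E"
    unfolding dis_r_def
    using lr_norm_triangle[OF assms, of "excess C D" "excess D E" "excess D C" "excess E D"]
    by (simp add: add.commute lr_norm_commute)
  finally show "dis_r r C E \<le> dis_r r C D + dis_r r D E" .
qed

lemma is_distance_on_inj_image:
  assumes "is_distance_on K d" "inj_on f L" "f ` L \<subseteq> K"
  shows "is_distance_on L (\<lambda>P Q. d (f P) (f Q))"
  using assms unfolding is_distance_on_def inj_on_def by (simp add: subset_eq) metis

lemma unit_sphere_eq_sphere: "unit_sphere = sphere 0 1"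
  unfolding unit_sphere_def by auto

lemma conic_Int_sphere_nonempty:
  fixes P :: "'a::real_normed_vector set"
  assumes "conic P" "P \<noteq> {}" "P \<noteq> {0}"
  shows "P \<inter> sphere 0 1 \<noteq> {}"
proof -
  obtain x where "x \<in> P" "x \<noteq> 0"
    using assms(2,3) by blast
  then have "(1 / norm x) *\<^sub>R x \<in> P \<inter> sphere 0 1"
    using conicD[OF assms(1), of x "1 / norm x"] by auto
  then show ?thesis
    by blast
qed

lemma conic_subset_if_Int_sphere_subset:
  fixes P Q :: "'a::real_normed_vector set"
  assumes "conic P" "conic Q" "Q \<noteq> {}" "P \<inter> sphere 0 1 \<subseteq> Q"
  shows "P \<subseteq> Q"
proof
  fix x assume "x \<in> P"
  show "x \<in> Q"
  proof (cases "x = 0")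
    case True
    then show ?thesis
      using assms(2,3) conic_contains_0 by blast
  next
    case False
    then have "(1 / norm x) *\<^sub>R x \<in> Q"
      using conicD[OF assms(1) \<open>x \<in> P\<close>, of "1 / norm x"] assms(4) by auto
    then show ?thesis
      using conicD[OF assms(2), of _ "norm x"] False by fastforce
  qed
qed

lemma inj_on_Int_unit_sphere: "inj_on (\<lambda>P. P \<inter> unit_sphere) nz_closed_convex_cones"
proof (rule inj_onI)
  fix P Q :: "'a set"
  assume "P \<in> nz_closed_convex_cones" "Q \<in> nz_closed_convex_cones"
    and eq: "P \<inter> unit_sphere = Q \<inter> unit_sphere"
  then have "conic P" "conic Q" "P \<noteq> {}" "Q \<noteq> {}"
    unfolding nz_closed_convex_cones_def convex_cone_def by auto
  then show "P = Q"
    using conic_subset_if_Int_sphere_subset[of P Q] conic_subset_if_Int_sphere_subset[of Q P] eq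
    unfolding unit_sphere_eq_sphere by blast
qed

lemma Int_unit_sphere_compact_nonempty:
  assumes "P \<in> nz_closed_convex_cones"
  shows "compact (P \<inter> unit_sphere) \<and> P \<inter> unit_sphere \<noteq> {}"
proof -
  have "closed P" "conic P" "P \<noteq> {}" "P \<noteq> {0}"
    using assms unfolding nz_closed_convex_cones_def convex_cone_def by auto
  then show ?thesis
    unfolding unit_sphere_eq_sphere
    using closed_Int_compact[OF _ compact_sphere] conic_Int_sphere_nonempty by blast
qed

lemma arccos_inner_unit_bounds:
  fixes u v :: "'a::real_inner"
  assumes "norm u = 1" "norm v = 1"
  shows "0 \<le> arccos (u \<bullet> v)" "arccos (u \<bullet> v) \<le> pi"
  using Cauchy_Schwarz_ineq2[of u v] assms by (auto intro!: arccos_lbound arccos_ubound)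

lemma norm_diff_unit_eq_chord:
  fixes u v :: "'a::real_inner"
  assumes "norm u = 1" "norm v = 1"
  shows "norm (u - v) = 2 * sin (arccos (u \<bullet> v) / 2)"
proof -
  define \<theta> where "\<theta> = arccos (u \<bullet> v)"
  have "\<theta> \<in> {0..pi}" "cos \<theta> = u \<bullet> v"
    using arccos_inner_unit_bounds[OF assms] Cauchy_Schwarz_ineq2[of u v] assms
    by (auto simp: \<theta>_def cos_arccos_abs)
  then have "sin (\<theta> / 2) \<ge> 0"
    by (intro sin_ge_zero) auto
  moreover have "(norm (u - v))\<^sup>2 = (2 * sin (\<theta> / 2))\<^sup>2"
    using \<open>cos \<theta> = u \<bullet> v\<close> assms cos_double_sin[of "\<theta> / 2"] unfolding norm_eq_1
    by (simp add: power2_norm_eq_inner inner_diff_left inner_diff_right inner_commute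
        power_mult_distrib)
  ultimately show ?thesis
    using power2_eq_iff_nonneg[of "norm (u - v)" "2 * sin (\<theta> / 2)"] unfolding \<theta>_def by simp
qed

lemma chord_le_iff:
  assumes "s \<in> {0..pi}" "t \<in> {0..pi}"
  shows "2 * sin (s / 2) \<le> 2 * sin (t / 2) \<longleftrightarrow> s \<le> t"
proof -
  have "sin (s / 2) \<le> sin (t / 2) \<longleftrightarrow> s / 2 \<le> t / 2"
    using assms by (intro sin_mono_le_eq) auto
  then show ?thesis
    by simp
qed

lemma infdist_eq_chord_of_min_angle:
  fixes u :: "'a::{real_inner,heine_borel}"
  assumes u: "norm u = 1" and B: "compact B" "B \<noteq> {}" "B \<subseteq> sphere 0 1"
  shows "infdist u B = 2 * sin ((INF v\<in>B. arccos (u \<bullet> v)) / 2)"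
    and "(INF v\<in>B. arccos (u \<bullet> v)) \<in> {0..pi}"
proof -
  have angle_range: "arccos (u \<bullet> v) \<in> {0..pi}" if "v \<in> B" for v
    using arccos_inner_unit_bounds[OF u] that B(3) by auto
  have chord: "dist u v = 2 * sin (arccos (u \<bullet> v) / 2)" if "v \<in> B" for v
    using norm_diff_unit_eq_chord[OF u] that B(3) by (auto simp: dist_norm)
  obtain v0 where v0: "v0 \<in> B" "infdist u B = dist u v0"
    using infdist_attains_inf[OF compact_imp_closed] B(1,2) by blast
  have "arccos (u \<bullet> v0) \<le> arccos (u \<bullet> v)" if "v \<in> B" for v
  proof -
    have "2 * sin (arccos (u \<bullet> v0) / 2) \<le> 2 * sin (arccos (u \<bullet> v) / 2)"
      using infdist_le[OF that, of u] v0(2) chord[OF that] chord[OF v0(1)] by simp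
    then show ?thesis
      using chord_le_iff[OF angle_range[OF v0(1)] angle_range[OF that]] by simp
  qed
  then have "(INF v\<in>B. arccos (u \<bullet> v)) = arccos (u \<bullet> v0)"
    using v0(1) by (intro cInf_eq_minimum) auto
  then show "infdist u B = 2 * sin ((INF v\<in>B. arccos (u \<bullet> v)) / 2)"
    and "(INF v\<in>B. arccos (u \<bullet> v)) \<in> {0..pi}"
    using v0 chord[OF v0(1)] angle_range[OF v0(1)] by simp_all
qed

lemma excess_eq_chord_of_max_min_angle:
  fixes A B :: "'a::euclidean_space set"
  assumes A: "compact A" "A \<noteq> {}" "A \<subseteq> sphere 0 1"
      and B: "compact B" "B \<noteq> {}" "B \<subseteq> sphere 0 1"
  shows "excess A B = 2 * sin ((SUP u\<in>A. INF v\<in>B. arccos (u \<bullet> v)) / 2)"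
proof -
  define h where "h u = (INF v\<in>B. arccos (u \<bullet> v))" for u
  have h: "infdist u B = 2 * sin (h u / 2)" "h u \<in> {0..pi}" if "u \<in> A" for u
    using infdist_eq_chord_of_min_angle[OF _ B, of u] that A(3) unfolding h_def by auto
  have "continuous_on A (\<lambda>u. infdist u B)"
    by (intro continuous_intros)
  then obtain u0 where u0: "u0 \<in> A" "\<And>u. u \<in> A \<Longrightarrow> infdist u B \<le> infdist u0 B"
    using continuous_attains_sup[OF A(1,2)] by blast
  have "excess A B = infdist u0 B"
    unfolding excess_eq_SUP_infdist[OF B(2)] using u0 by (intro cSup_eq_maximum) auto
  moreover have "(SUP u\<in>A. h u) = h u0"
  proof (rule cSup_eq_maximum)
    fix y assume "y \<in> h ` A"
    then obtain u where u: "u \<in> A" "y = h u"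
      by blast
    have "2 * sin (h u / 2) \<le> 2 * sin (h u0 / 2)"
      using u0(2)[OF u(1)] h(1)[OF u(1)] h(1)[OF u0(1)] by simp
    then show "y \<le> h u0"
      using chord_le_iff[OF h(2)[OF u(1)] h(2)[OF u0(1)]] u(2) by simp
  qed (use u0(1) in blast)
  ultimately show ?thesis
    using h(1)[OF u0(1)] unfolding h_def by simp
qed

lemma excess_Int_unit_sphere_eq_Theta:
  fixes P Q :: "'a::euclidean_space set"
  assumes "P \<in> nz_closed_convex_cones" "Q \<in> nz_closed_convex_cones"
  shows "excess (P \<inter> unit_sphere) (Q \<inter> unit_sphere) = 2 * sin (Theta P Q / 2)"
  using Int_unit_sphere_compact_nonempty[OF assms(1)] Int_unit_sphere_compact_nonempty[OF assms(2)]
  unfolding Theta_def unit_sphere_eq_sphere by (intro excess_eq_chord_of_max_min_angle) auto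

theorem mainTheorem4:
  fixes r :: ereal
  assumes "1 \<le> r"
  shows "is_distance_on (nz_closed_convex_cones :: 'a::euclidean_space set set) (Dis_r r)
    \<and> (\<forall>P\<in>(nz_closed_convex_cones :: 'a set set). \<forall>Q\<in>nz_closed_convex_cones.
          Dis_r r P Q = 2 * lr_norm r (sin (Theta P Q / 2)) (sin (Theta Q P / 2))
        \<and> excess (P \<inter> unit_sphere) (Q \<inter> unit_sphere) = 2 * sin (Theta P Q / 2))"
proof (intro conjI ballI)
  have "is_distance_on nz_closed_convex_cones
      (\<lambda>P Q :: 'a set. dis_r r (P \<inter> unit_sphere) (Q \<inter> unit_sphere))"
    using Int_unit_sphere_compact_nonempty
    by (intro is_distance_on_inj_image[OF is_distance_on_dis_r[OF assms] inj_on_Int_unit_sphere])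
      blast
  then show "is_distance_on (nz_closed_convex_cones :: 'a set set) (Dis_r r)"
    by (simp only: Dis_r_def[abs_def])
next
  fix P Q :: "'a set"
  assume "P \<in> nz_closed_convex_cones" "Q \<in> nz_closed_convex_cones"
  then show "excess (P \<inter> unit_sphere) (Q \<inter> unit_sphere) = 2 * sin (Theta P Q / 2)"
    and "Dis_r r P Q = 2 * lr_norm r (sin (Theta P Q / 2)) (sin (Theta Q P / 2))"
    using lr_norm_scale[OF assms, of 2]
    by (simp_all add: Dis_r_def dis_r_def excess_Int_unit_sphere_eq_Theta)
qed

end
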